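(* Let $G=(V,E)$ be a directed graph in which every node has at least one out-neighbour, let $\alpha\in(0,1)$, $s\in V$, $r_{max}>0$, $\epsilon>0$, $\delta\in(0,1]$ and $p_f\in(0,1)$. Run the FORA estimator (described in the context) with $\omega=r_{sum}\cdot\frac{(2\epsilon/3+2)\ln(2/p_f)}{\epsilon^2\delta}$, where $r_{sum}$ is the total residue after Forward Push. Then for every node $t$ with $\pi(s,t)>\delta$, the returned estimate satisfies $|\pi(s,t)-\hat{\pi}(s,t)|\le\epsilon\cdot\pi(s,t)$ with probability at least $1-p_f$.
   Context: Random walk with restart from a node $u$: starting at $u$, at each step the walk terminates at the current node with probability $\alpha$, and otherwise moves to an out-neighbour of the current node chosen uniformly at random. The personalized PageRank $\pi(u,t)$ is the probability that such a walk from $u$ terminates at $t$. $N^{out}(v)$ denotes the set of out-neighbours of $v$. Forward Push (source $s$, threshold $r_{max}$): initialise residues $r(s,s)=1$, $r(s,v)=0$ for $v\neq s$, and reserves $\pi^\circ(s,v)=0$ for all $v$. While some node $v$ has $r(s,v)/|N^{out}(v)|>r_{max}$, pick such a $v$; for each $u\in N^{out}(v)$ increase $r(s,u)$ by $(1-\alpha)r(s,v)/|N^{out}(v)|$; increase $\pi^\circ(s,v)$ by $\alpha\, r(s,v)$; set $r(s,v)=0$. FORA estimator (parameter $\omega>0$): run Forward Push, let $r_{sum}=\sum_{v} r(s,v)$, and set $\hat{\pi}(s,v)=\pi^\circ(s,v)$ for all $v$. For each node $v_i$ with $r(s,v_i)>0$, let $\omega_i=\lceil r(s,v_i)\,\omega/r_{sum}\rceil$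 and $a_i=\frac{r(s,v_i)}{r_{sum}}\cdot\frac{\omega}{\omega_i}$; generate $\omega_i$ independent random walks with restart from $v_i$, and for each, if it terminates at $t$, increase $\hat{\pi}(s,t)$ by $a_i\, r_{sum}/\omega$. Return all $\hat{\pi}(s,v)$. *)

theory Defs
  imports "HOL-Probability.Probability"
begin

text \<open>Random walk with restart from u: the number of moves before termination is
  geometric (each step terminates with prob. alpha), each move goes to a uniformly
  random out-neighbour.\<close>

primrec walk_pmf :: "('a \<Rightarrow> 'a set) \<Rightarrow> nat \<Rightarrow> 'a \<Rightarrow> 'a pmf" where
  "walk_pmf N 0 u = return_pmf u"
| "walk_pmf N (Suc k) u = bind_pmf (pmf_of_set (N u)) (\<lambda>v. walk_pmf N k v)"

definition rwr_pmf :: "real \<Rightarrow> ('a \<Rightarrow> 'a set) \<Rightarrow> 'a \<Rightarrow> 'a pmf" where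
  "rwr_pmf \<alpha> N u = bind_pmf (geometric_pmf \<alpha>) (\<lambda>k. walk_pmf N k u)"

definition ppr :: "real \<Rightarrow> ('a \<Rightarrow> 'a set) \<Rightarrow> 'a \<Rightarrow> 'a \<Rightarrow> real" where
  "ppr \<alpha> N u t = pmf (rwr_pmf \<alpha> N u) t"

text \<open>Forward Push. A state is (reserve, residue).\<close>
definition fp_init :: "'a \<Rightarrow> ('a \<Rightarrow> real) \<times> ('a \<Rightarrow> real)" where
  "fp_init s = ((\<lambda>v. 0), (\<lambda>v. if v = s then 1 else 0))"

inductive fp_step :: "real \<Rightarrow> ('a \<Rightarrow> 'a set) \<Rightarrow> 'a set \<Rightarrow> real
    \<Rightarrow> ('a \<Rightarrow> real) \<times> ('a \<Rightarrow> real) \<Rightarrow> ('a \<Rightarrow> real) \<times> ('a \<Rightarrow> real) \<Rightarrow> bool"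
  for \<alpha> N V rmax where
  push: "v \<in> V \<Longrightarrow> r v / real (card (N v)) > rmax \<Longrightarrow>
    fp_step \<alpha> N V rmax (p, r)
      (p(v := p v + \<alpha> * r v),
       (\<lambda>u. (if u = v then 0 else r u) +
            (if u \<in> N v then (1 - \<alpha>) * r v / real (card (N v)) else 0)))"

definition fp_result :: "real \<Rightarrow> ('a \<Rightarrow> 'a set) \<Rightarrow> 'a set \<Rightarrow> real \<Rightarrow> 'a
    \<Rightarrow> ('a \<Rightarrow> real) \<times> ('a \<Rightarrow> real) \<Rightarrow> bool" where
  "fp_result \<alpha> N V rmax s st \<longleftrightarrow>
     (fp_step \<alpha> N V rmax)\<^sup>*\<^sup>* (fp_init s) st \<and>
     (\<forall>v\<in>V. \<not> (snd st v / real (card (N v)) > rmax))"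

text \<open>Walk number j from node v (j < omega_v) is W (v, j); all walks are independent.\<close>
definition fora_pmf :: "real \<Rightarrow> ('a \<Rightarrow> 'a set) \<Rightarrow> 'a set \<Rightarrow> ('a \<Rightarrow> real) \<Rightarrow> ('a \<Rightarrow> real)
    \<Rightarrow> real \<Rightarrow> ('a \<Rightarrow> real) pmf" where
  "fora_pmf \<alpha> N V p r \<omega> =
    (let rsum = (\<Sum>v\<in>V. r v);
         S = {v \<in> V. r v > 0};
         om = (\<lambda>v. nat \<lceil>r v * \<omega> / rsum\<rceil>);
         a = (\<lambda>v. r v / rsum * (\<omega> / real (om v)));
         I = {(v, j). v \<in> S \<and> j < om v}
     in map_pmf
          (\<lambda>W t. p t + (\<Sum>(v, j)\<in>I. if W (v, j) = t then a v * rsum / \<omega> else 0))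
          (Pi_pmf I undefined (\<lambda>(v, j). rwr_pmf \<alpha> N v)))"

end

theory Submission
  imports Defs
begin

text \<open>Forward Push preserves the decomposition
  \<open>\<pi>(s,t) = p(t) + (\<Sum>v. r(v) * \<pi>(v,t))\<close> with nonnegative reserves \<open>p\<close> and residues \<open>r\<close>:
  a push at \<open>v\<close> replaces \<open>r(v) * \<pi>(v,t)\<close> by the right-hand side of the one-step recursion
  \<open>\<pi>(v,t) = \<alpha> [v = t] + (1 - \<alpha>) / |N v| * (\<Sum>w\<in>N v. \<pi>(w,t))\<close>.
  The FORA estimate of \<open>\<pi>(s,t)\<close> is therefore \<open>p(t)\<close> plus a sum of independent random
  variables with values in \<open>[0, r_sum / \<omega>]\<close> and total mean \<open>\<pi>(s,t) - p(t) \<le> \<pi>(s,t)\<close>.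
  Bernstein's inequality bounds the probability of a deviation \<open>\<epsilon> \<pi>(s,t)\<close> by
  \<open>2 exp (- \<omega> \<epsilon>\<^sup>2 \<pi>(s,t) / (r_sum (2 + 2 \<epsilon> / 3)))\<close>, which for the chosen \<omega> is
  \<open>2 exp (- \<pi>(s,t) / \<delta> * ln (2 / pf)) \<le> pf\<close>.\<close>

section \<open>Personalized PageRank and Forward Push\<close>

lemma rwr_pmf_unfold:
  assumes "0 < \<alpha>" "\<alpha> < 1"
  shows "rwr_pmf \<alpha> N u = bernoulli_pmf \<alpha> \<bind>
           (\<lambda>b. if b then return_pmf u else pmf_of_set (N u) \<bind> rwr_pmf \<alpha> N)"
proof -
  have "rwr_pmf \<alpha> N u = bernoulli_pmf \<alpha> \<bind>
      (\<lambda>b. (if b then return_pmf 0 else map_pmf Suc (geometric_pmf \<alpha>)) \<bind> (\<lambda>k. walk_pmf N k u))"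
    unfolding rwr_pmf_def
    by (subst geometric_bind_pmf_unfold) (use assms in \<open>auto simp: bind_assoc_pmf\<close>)
  also have "\<dots> = bernoulli_pmf \<alpha> \<bind>
      (\<lambda>b. if b then return_pmf u else pmf_of_set (N u) \<bind> rwr_pmf \<alpha> N)"
  proof (intro bind_pmf_cong refl)
    have "map_pmf Suc (geometric_pmf \<alpha>) \<bind> (\<lambda>k. walk_pmf N k u)
        = geometric_pmf \<alpha> \<bind> (\<lambda>k. pmf_of_set (N u) \<bind> (\<lambda>w. walk_pmf N k w))"
      by (simp add: bind_map_pmf)
    also have "\<dots> = pmf_of_set (N u) \<bind> rwr_pmf \<alpha> N"
      unfolding rwr_pmf_def by (rule bind_commute_pmf)
    finally show "(if b then return_pmf 0 else map_pmf Suc (geometric_pmf \<alpha>)) \<bind> (\<lambda>k. walk_pmf N k u)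
        = (if b then return_pmf u else pmf_of_set (N u) \<bind> rwr_pmf \<alpha> N)" for b
      by (simp add: bind_return_pmf)
  qed
  finally show ?thesis .
qed

lemma ppr_unfold:
  assumes "0 < \<alpha>" "\<alpha> < 1" "finite (N u)" "N u \<noteq> {}"
  shows "ppr \<alpha> N u t = \<alpha> * (if u = t then 1 else 0)
           + (1 - \<alpha>) / real (card (N u)) * (\<Sum>w\<in>N u. ppr \<alpha> N w t)"
  using assms unfolding ppr_def
  by (subst rwr_pmf_unfold) (auto simp: pmf_bind integral_pmf_of_set)

fun fp_invariant :: "real \<Rightarrow> ('a \<Rightarrow> 'a set) \<Rightarrow> 'a set \<Rightarrow> 'a
    \<Rightarrow> ('a \<Rightarrow> real) \<times> ('a \<Rightarrow> real) \<Rightarrow> bool" where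
  "fp_invariant \<alpha> N V s (p, r) \<longleftrightarrow>
     (\<forall>t. ppr \<alpha> N s t = p t + (\<Sum>v\<in>V. r v * ppr \<alpha> N v t)) \<and> (\<forall>v. 0 \<le> p v) \<and> (\<forall>v. 0 \<le> r v)"

lemma fp_invariant_init:
  assumes "finite V" "s \<in> V"
  shows "fp_invariant \<alpha> N V s (fp_init s)"
proof -
  have "(\<Sum>v\<in>V. (if v = s then 1 else 0) * ppr \<alpha> N v t) = ppr \<alpha> N s t" for t
    using assms by (simp add: if_distrib[of "\<lambda>x. x * _"] cong: if_cong)
  then show ?thesis by (simp add: fp_init_def)
qed

lemma fp_invariant_step:
  assumes "finite V" "\<forall>v\<in>V. N v \<subseteq> V \<and> N v \<noteq> {}" "0 < \<alpha>" "\<alpha> < 1"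
    and "fp_step \<alpha> N V rmax st st'" "fp_invariant \<alpha> N V s st"
  shows "fp_invariant \<alpha> N V s st'"
  using assms(5)
proof cases
  case (push v r p)
  define c where "c = (1 - \<alpha>) * r v / real (card (N v))"
  have "v \<in> V" using push by simp
  with assms(1,2) have NV: "N v \<subseteq> V" "N v \<noteq> {}" "finite (N v)"
    by (auto intro: finite_subset)
  from assms(6) have decomp: "ppr \<alpha> N s t = p t + (\<Sum>u\<in>V. r u * ppr \<alpha> N u t)"
    and "0 \<le> p u" and "0 \<le> r u" for t u by (simp_all add: push)
  then have "0 \<le> c" using assms(4) by (simp add: c_def)
  have pushed: "r v * ppr \<alpha> N v t = \<alpha> * r v * (if v = t then 1 else 0) + c * (\<Sum>w\<in>N v. ppr \<alpha> N w t)"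
    for t by (subst ppr_unfold) (use assms(3,4) NV in \<open>auto simp: c_def algebra_simps\<close>)
  have residues: "(\<Sum>u\<in>V. ((if u = v then 0 else r u) + (if u \<in> N v then c else 0)) * ppr \<alpha> N u t)
      = (\<Sum>u\<in>V. r u * ppr \<alpha> N u t) - r v * ppr \<alpha> N v t + c * (\<Sum>w\<in>N v. ppr \<alpha> N w t)" for t
  proof -
    have "(\<Sum>u\<in>V. ((if u = v then 0 else r u) + (if u \<in> N v then c else 0)) * ppr \<alpha> N u t)
        = (\<Sum>u\<in>V. r u * ppr \<alpha> N u t - (if u = v then r v * ppr \<alpha> N v t else 0)
                   + (if u \<in> N v then c * ppr \<alpha> N u t else 0))"
      by (intro sum.cong) (auto simp: algebra_simps)
    also have "\<dots> = (\<Sum>u\<in>V. r u * ppr \<alpha> N u t) - r v * ppr \<alpha> N v t + c * (\<Sum>w\<in>N v. ppr \<alpha> N w t)"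
      using assms(1) \<open>v \<in> V\<close> NV
      by (simp add: sum.distrib sum_subtractf sum_distrib_left
          flip: sum.inter_restrict add: Int_absorb1)
    finally show ?thesis .
  qed
  show ?thesis
    unfolding push(2) fp_invariant.simps c_def[symmetric]
    using decomp pushed residues \<open>0 \<le> c\<close> \<open>\<And>u. 0 \<le> p u\<close> \<open>\<And>u. 0 \<le> r u\<close> assms(3)
    by auto
qed

lemma fp_result_invariant:
  assumes "finite V" "\<forall>v\<in>V. N v \<subseteq> V \<and> N v \<noteq> {}" "0 < \<alpha>" "\<alpha> < 1" "s \<in> V"
    and "fp_result \<alpha> N V rmax s st"
  shows "fp_invariant \<alpha> N V s st"
proof -
  from assms(6) have "(fp_step \<alpha> N V rmax)\<^sup>*\<^sup>* (fp_init s) st" by (simp add: fp_result_def)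
  then show ?thesis
    by (induction rule: rtranclp_induct)
       (use fp_invariant_init[OF assms(1,5)] fp_invariant_step[OF assms(1-4)] in blast)+
qed

section \<open>Bernstein's inequality for product distributions\<close>

lemma two_mult_three_power_le_fact: "2 * 3 ^ n \<le> (fact (n + 2) :: real)"
proof (induction n)
  case (Suc n)
  have "2 * 3 ^ Suc n = 3 * (2 * 3 ^ n :: real)" by simp
  also have "\<dots> \<le> real (Suc n + 2) * fact (n + 2)"
    using Suc by (intro mult_mono) auto
  also have "\<dots> = fact (Suc n + 2)" by (simp add: algebra_simps)
  finally show ?case .
qed (simp add: numeral_2_eq_2)

lemma exp_minus_one_minus_le:
  fixes x :: real
  assumes "0 \<le> x" "x < 3"
  shows "exp x - 1 - x \<le> x\<^sup>2 / (2 * (1 - x / 3))"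
proof -
  have "(\<lambda>n. x ^ n / fact n) sums exp x"
    using exp_converges[of x] by (simp add: scaleR_conv_of_real divide_inverse mult.commute)
  then have tail: "(\<lambda>n. x ^ (n + 2) / fact (n + 2)) sums (exp x - 1 - x)"
    using sums_iff_shift[of "\<lambda>n. x ^ n / fact n" 2] by (simp add: numeral_2_eq_2)
  have "(\<lambda>n. (x / 3) ^ n) sums (1 / (1 - x / 3))"
    using assms by (intro geometric_sums) auto
  then have geom: "(\<lambda>n. x\<^sup>2 / 2 * (x / 3) ^ n) sums (x\<^sup>2 / 2 * (1 / (1 - x / 3)))"
    by (rule sums_mult)
  have "x ^ (n + 2) / fact (n + 2) \<le> x ^ (n + 2) / (2 * 3 ^ n)" for n
    using two_mult_three_power_le_fact[of n] assms by (intro divide_left_mono) auto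
  also have "x ^ (n + 2) / (2 * 3 ^ n) = x\<^sup>2 / 2 * (x / 3) ^ n" for n
    by (simp add: power_add power_divide power2_eq_square)
  finally show ?thesis
    using sums_le[OF _ tail geom] by simp
qed

lemma exp_neg_minus_one_plus_le:
  fixes x :: real
  assumes "0 \<le> x"
  shows "exp (- x) - 1 + x \<le> exp x - 1 - x"
proof -
  obtain \<xi> where "exp (- x) = (\<Sum>m<3. (- x) ^ m / fact m) + exp \<xi> / fact 3 * (- x) ^ 3"
    using Maclaurin_exp_le[of "- x" 3] by blast
  moreover have "(\<Sum>m<3. (- x) ^ m / fact m) = 1 - x + x\<^sup>2 / 2"
    by (simp add: numeral_3_eq_3 power2_eq_square fact_numeral)
  moreover have "exp \<xi> / fact 3 * (- x) ^ 3 \<le> 0"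
    using assms by (intro mult_nonneg_nonpos) (auto simp: power_odd_eq)
  ultimately show ?thesis
    using exp_lower_Taylor_quadratic[OF assms] by linarith
qed

lemma exp_mult_le_chord:
  fixes b x \<theta> :: real
  assumes "0 < b" "0 \<le> x" "x \<le> b"
  shows "exp (\<theta> * x) \<le> 1 + x * (exp (\<theta> * b) - 1) / b"
proof -
  have "exp ((1 - x / b) *\<^sub>R 0 + (x / b) *\<^sub>R (\<theta> * b)) \<le> (1 - x / b) * exp 0 + (x / b) * exp (\<theta> * b)"
    using assms by (intro convex_onD[OF exp_convex]) auto
  moreover have "(1 - x / b) *\<^sub>R 0 + (x / b) *\<^sub>R (\<theta> * b) = \<theta> * x"
    using assms by simp
  moreover have "(1 - x / b) * exp 0 + (x / b) * exp (\<theta> * b) = 1 + x * (exp (\<theta> * b) - 1) / b"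
    using assms by (simp add: field_simps)
  ultimately show ?thesis by simp
qed

lemma expectation_exp_mult_le:
  fixes X :: "'b \<Rightarrow> real"
  assumes "0 < b" "\<And>y. 0 \<le> X y" "\<And>y. X y \<le> b"
  shows "measure_pmf.expectation Q (\<lambda>y. exp (\<theta> * X y))
           \<le> exp (measure_pmf.expectation Q X * (exp (\<theta> * b) - 1) / b)"
proof -
  have "integrable Q X"
    using assms by (intro measure_pmf.integrable_const_bound[where B=b]) (auto intro: abs_leI order.trans)
  moreover have "integrable Q (\<lambda>y. exp (\<theta> * X y))"
    by (intro measure_pmf.integrable_const_bound[where B="exp (\<bar>\<theta>\<bar> * b)"])
       (use assms in \<open>auto intro!: mult_mono simp: abs_mult\<close>)
  ultimately have "measure_pmf.expectation Q (\<lambda>y. exp (\<theta> * X y))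
      \<le> measure_pmf.expectation Q (\<lambda>y. 1 + X y * ((exp (\<theta> * b) - 1) / b))"
    using exp_mult_le_chord[OF assms(1,2,3)] by (intro integral_mono) auto
  also have "\<dots> = 1 + measure_pmf.expectation Q X * (exp (\<theta> * b) - 1) / b"
    using \<open>integrable Q X\<close> by simp
  also have "\<dots> \<le> exp (measure_pmf.expectation Q X * (exp (\<theta> * b) - 1) / b)"
    by (rule exp_ge_add_one_self[THEN order.trans[rotated]]) simp
  finally show ?thesis .
qed

lemma integrable_exp_sum_Pi_pmf:
  fixes X :: "'i \<Rightarrow> 'b \<Rightarrow> real"
  assumes "finite A" "\<And>i y. i \<in> A \<Longrightarrow> 0 \<le> X i y" "\<And>i y. i \<in> A \<Longrightarrow> X i y \<le> b"
  shows "integrable (Pi_pmf A d P) (\<lambda>y. exp (\<theta> * (\<Sum>i\<in>A. X i (y i))))"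
proof -
  have "norm (exp (\<theta> * (\<Sum>i\<in>A. X i (y i)))) \<le> exp (\<bar>\<theta>\<bar> * (card A * b))" for y
  proof -
    have "\<bar>\<Sum>i\<in>A. X i (y i)\<bar> \<le> card A * b"
      using sum_mono[of A "\<lambda>i. X i (y i)" "\<lambda>_. b"] sum_nonneg[of A "\<lambda>i. X i (y i)"] assms by auto
    then have "\<bar>\<theta> * (\<Sum>i\<in>A. X i (y i))\<bar> \<le> \<bar>\<theta>\<bar> * (card A * b)"
      unfolding abs_mult by (rule mult_left_mono) simp
    then show ?thesis by simp
  qed
  then show ?thesis
    by (intro measure_pmf.integrable_const_bound[where B="exp (\<bar>\<theta>\<bar> * (card A * b))"] AE_I2) auto
qed

lemma expectation_exp_sum_Pi_pmf_le:
  fixes X :: "'i \<Rightarrow> 'b \<Rightarrow> real"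
  assumes "finite A" "0 < b" "\<And>i y. i \<in> A \<Longrightarrow> 0 \<le> X i y" "\<And>i y. i \<in> A \<Longrightarrow> X i y \<le> b"
  shows "measure_pmf.expectation (Pi_pmf A d P) (\<lambda>y. exp (\<theta> * (\<Sum>i\<in>A. X i (y i))))
     \<le> exp ((\<Sum>i\<in>A. measure_pmf.expectation (P i) (X i)) * (exp (\<theta> * b) - 1) / b)"
proof -
  have "measure_pmf.expectation (Pi_pmf A d P) (\<lambda>y. exp (\<theta> * (\<Sum>i\<in>A. X i (y i))))
      = measure_pmf.expectation (Pi_pmf A d P) (\<lambda>y. \<Prod>i\<in>A. exp (\<theta> * X i (y i)))"
    using assms(1) by (simp add: sum_distrib_left exp_sum)
  also have "\<dots> = (\<Prod>i\<in>A. measure_pmf.expectation (P i) (\<lambda>y. exp (\<theta> * X i y)))"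
    by (intro expectation_prod_Pi_pmf assms(1) measure_pmf.integrable_const_bound[where B="exp (\<bar>\<theta>\<bar> * b)"])
       (use assms in \<open>auto intro!: mult_mono simp: abs_mult\<close>)
  also have "\<dots> \<le> (\<Prod>i\<in>A. exp (measure_pmf.expectation (P i) (X i) * (exp (\<theta> * b) - 1) / b))"
    by (intro prod_mono conjI expectation_exp_mult_le) (use assms in auto)
  also have "\<dots> = exp ((\<Sum>i\<in>A. measure_pmf.expectation (P i) (X i)) * (exp (\<theta> * b) - 1) / b)"
    using assms(1) by (simp add: exp_sum sum_distrib_right sum_divide_distrib)
  finally show ?thesis .
qed

text \<open>The Chernoff parameter is \<open>x / b\<close>; the choice \<open>x = l / (M + l / 3)\<close> is the one that
  yields Bernstein's inequality.\<close>

lemma Bernstein_exponent_le: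
  fixes b l M \<mu> :: real
  assumes "0 < b" "0 \<le> \<mu>" "\<mu> \<le> M" "0 < M" "0 < l" "x = l / (M + l / 3)"
  shows "(\<mu> * (exp x - 1 - x) - x * l) / b \<le> - (l\<^sup>2 / (2 * b * (M + l / 3)))"
proof -
  have "0 < M + l / 3" using assms by simp
  have "0 \<le> x" "x < 3"
    using \<open>0 < M + l / 3\<close> assms by (simp_all add: pos_divide_less_eq)
  have "\<mu> * (exp x - 1 - x) \<le> M * (exp x - 1 - x)"
    using exp_ge_add_one_self[of x] assms(3) by (intro mult_right_mono) linarith+
  also have "\<dots> \<le> M * (x\<^sup>2 / (2 * (1 - x / 3)))"
    using exp_minus_one_minus_le[OF \<open>0 \<le> x\<close> \<open>x < 3\<close>] assms by (intro mult_left_mono) auto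
  also have "\<dots> = x * (x * (M + l / 3)) / 2"
  proof -
    have "1 - x / 3 = M / (M + l / 3)"
      using \<open>0 < M + l / 3\<close> assms(6) by (simp add: field_simps)
    then show ?thesis
      using \<open>0 < M + l / 3\<close> assms(4) by (simp add: power2_eq_square)
  qed
  also have "\<dots> = x * l / 2"
    using \<open>0 < M + l / 3\<close> assms(6) by simp
  finally have "(\<mu> * (exp x - 1 - x) - x * l) / b \<le> (x * l / 2 - x * l) / b"
    using assms by (intro divide_right_mono) auto
  also have "\<dots> = - (x * l / (2 * b))"
    by (simp add: field_simps)
  also have "\<dots> = - (l\<^sup>2 / (2 * b * (M + l / 3)))"
    by (simp add: assms(6) power2_eq_square mult_ac)
  finally show ?thesis .
qed

lemma Pi_pmf_sum_upper_tail:
  fixes X :: "'i \<Rightarrow> 'b \<Rightarrow> real"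
  assumes "finite A" "0 < b" "\<And>i y. i \<in> A \<Longrightarrow> 0 \<le> X i y" "\<And>i y. i \<in> A \<Longrightarrow> X i y \<le> b"
    and "\<mu> = (\<Sum>i\<in>A. measure_pmf.expectation (P i) (X i))" "\<mu> \<le> M" "0 < M" "0 < l"
  shows "measure_pmf.prob (Pi_pmf A d P) {y. \<mu> + l \<le> (\<Sum>i\<in>A. X i (y i))}
           \<le> exp (- (l\<^sup>2 / (2 * b * (M + l / 3))))"
proof -
  define x where "x = l / (M + l / 3)"
  define S where "S = (\<lambda>y. \<Sum>i\<in>A. X i (y i))"
  have "0 < x" using assms by (simp add: x_def)
  have "0 \<le> \<mu>"
    unfolding assms(5) by (intro sum_nonneg Bochner_Integration.integral_nonneg) (use assms in auto)
  have "integrable (Pi_pmf A d P) (\<lambda>y. exp (x / b * S y))"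
    unfolding S_def by (rule integrable_exp_sum_Pi_pmf) (use assms in auto)
  then have "measure_pmf.prob (Pi_pmf A d P) {y. \<mu> + l \<le> S y}
      \<le> exp (- (x / b) * (\<mu> + l)) * measure_pmf.expectation (Pi_pmf A d P) (\<lambda>y. exp (x / b * S y))"
    using measure_pmf.Chernoff_ineq_ge[where A=UNIV and s="x / b" and f=S and a="\<mu> + l" and M="Pi_pmf A d P"]
      \<open>0 < x\<close> assms(2) by (simp add: set_integrable_def set_lebesgue_integral_def)
  also have "\<dots> \<le> exp (- (x / b) * (\<mu> + l)) * exp (\<mu> * (exp (x / b * b) - 1) / b)"
    unfolding S_def assms(5) by (intro mult_left_mono expectation_exp_sum_Pi_pmf_le) (use assms in auto)
  also have "\<dots> = exp ((\<mu> * (exp x - 1 - x) - x * l) / b)"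
    using assms(2) by (simp add: field_simps flip: exp_add)
  also have "\<dots> \<le> exp (- (l\<^sup>2 / (2 * b * (M + l / 3))))"
    using Bernstein_exponent_le[OF assms(2) \<open>0 \<le> \<mu>\<close> assms(6-8) x_def] by simp
  finally show ?thesis unfolding S_def .
qed

lemma Pi_pmf_sum_lower_tail:
  fixes X :: "'i \<Rightarrow> 'b \<Rightarrow> real"
  assumes "finite A" "0 < b" "\<And>i y. i \<in> A \<Longrightarrow> 0 \<le> X i y" "\<And>i y. i \<in> A \<Longrightarrow> X i y \<le> b"
    and "\<mu> = (\<Sum>i\<in>A. measure_pmf.expectation (P i) (X i))" "\<mu> \<le> M" "0 < M" "0 < l"
  shows "measure_pmf.prob (Pi_pmf A d P) {y. (\<Sum>i\<in>A. X i (y i)) \<le> \<mu> - l}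
           \<le> exp (- (l\<^sup>2 / (2 * b * (M + l / 3))))"
proof -
  define x where "x = l / (M + l / 3)"
  define S where "S = (\<lambda>y. \<Sum>i\<in>A. X i (y i))"
  have "0 < x" using assms by (simp add: x_def)
  have "0 \<le> \<mu>"
    unfolding assms(5) by (intro sum_nonneg Bochner_Integration.integral_nonneg) (use assms in auto)
  have "integrable (Pi_pmf A d P) (\<lambda>y. exp (- (x / b) * S y))"
    unfolding S_def by (rule integrable_exp_sum_Pi_pmf) (use assms in auto)
  then have "measure_pmf.prob (Pi_pmf A d P) {y. S y \<le> \<mu> - l}
      \<le> exp (x / b * (\<mu> - l)) * measure_pmf.expectation (Pi_pmf A d P) (\<lambda>y. exp (- (x / b) * S y))"
    using measure_pmf.Chernoff_ineq_le[where A=UNIV and s="x / b" and f=S and a="\<mu> - l" and M="Pi_pmf A d P"]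
      \<open>0 < x\<close> assms(2) by (simp add: set_integrable_def set_lebesgue_integral_def)
  also have "\<dots> \<le> exp (x / b * (\<mu> - l)) * exp (\<mu> * (exp (- (x / b) * b) - 1) / b)"
    unfolding S_def assms(5) by (intro mult_left_mono expectation_exp_sum_Pi_pmf_le) (use assms in auto)
  also have "\<dots> = exp ((\<mu> * (exp (- x) - 1 + x) - x * l) / b)"
    using assms(2) by (simp add: field_simps flip: exp_add)
  also have "\<dots> \<le> exp ((\<mu> * (exp x - 1 - x) - x * l) / b)"
    using exp_neg_minus_one_plus_le[of x] \<open>0 < x\<close> \<open>0 \<le> \<mu>\<close> assms(2)
    by (simp add: divide_right_mono mult_left_mono)
  also have "\<dots> \<le> exp (- (l\<^sup>2 / (2 * b * (M + l / 3))))"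
    using Bernstein_exponent_le[OF assms(2) \<open>0 \<le> \<mu>\<close> assms(6-8) x_def] by simp
  finally show ?thesis unfolding S_def .
qed

theorem Pi_pmf_sum_Bernstein:
  fixes X :: "'i \<Rightarrow> 'b \<Rightarrow> real"
  assumes "finite A" "0 < b" "\<And>i y. i \<in> A \<Longrightarrow> 0 \<le> X i y" "\<And>i y. i \<in> A \<Longrightarrow> X i y \<le> b"
    and "\<mu> = (\<Sum>i\<in>A. measure_pmf.expectation (P i) (X i))" "\<mu> \<le> M" "0 < M" "0 < l"
  shows "measure_pmf.prob (Pi_pmf A d P) {y. l \<le> \<bar>(\<Sum>i\<in>A. X i (y i)) - \<mu>\<bar>}
           \<le> 2 * exp (- (l\<^sup>2 / (2 * b * (M + l / 3))))"
proof -
  let ?Q = "Pi_pmf A d P" and ?S = "\<lambda>y. \<Sum>i\<in>A. X i (y i)"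
  have "measure_pmf.prob ?Q {y. l \<le> \<bar>?S y - \<mu>\<bar>}
      \<le> measure_pmf.prob ?Q ({y. \<mu> + l \<le> ?S y} \<union> {y. ?S y \<le> \<mu> - l})"
    by (intro measure_pmf.finite_measure_mono) auto
  also have "\<dots> \<le> measure_pmf.prob ?Q {y. \<mu> + l \<le> ?S y} + measure_pmf.prob ?Q {y. ?S y \<le> \<mu> - l}"
    by (rule measure_Un_le) auto
  finally show ?thesis
    using Pi_pmf_sum_upper_tail[OF assms, of d] Pi_pmf_sum_lower_tail[OF assms, of d] by linarith
qed

section \<open>The FORA estimator\<close>

lemma expectation_if_eq:
  fixes k :: real
  shows "measure_pmf.expectation Q (\<lambda>w. if w = t then k else 0) = k * pmf Q t"
proof -
  have "(\<lambda>w. if w = t then k else 0) = (\<lambda>w. k * indicator {t} w)"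
    by (auto simp: indicator_def)
  then show ?thesis by (simp add: measure_pmf_single)
qed

text \<open>With \<open>\<omega> = r_sum * c\<close>, node \<open>v\<close> launches \<open>\<lceil>r(v) * c\<rceil>\<close> walks, and every walk from \<open>v\<close>
  that ends at the target adds \<open>r(v) / \<lceil>r(v) * c\<rceil> \<le> 1 / c\<close> to the estimate.\<close>

definition fora_walks :: "'a set \<Rightarrow> ('a \<Rightarrow> real) \<Rightarrow> real \<Rightarrow> ('a \<times> nat) set" where
  "fora_walks V r c = Sigma {v \<in> V. 0 < r v} (\<lambda>v. {..<nat \<lceil>r v * c\<rceil>})"

lemma finite_fora_walks: "finite V \<Longrightarrow> finite (fora_walks V r c)"
  by (simp add: fora_walks_def)

lemma fora_pmf_eq_map_Pi_pmf:
  assumes "finite V" "\<And>v. 0 \<le> r v" "0 < c"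
  shows "fora_pmf \<alpha> N V p r ((\<Sum>v\<in>V. r v) * c) =
    map_pmf (\<lambda>W t. p t + (\<Sum>(v, j)\<in>fora_walks V r c. if W (v, j) = t then r v / nat \<lceil>r v * c\<rceil> else 0))
      (Pi_pmf (fora_walks V r c) undefined (\<lambda>(v, j). rwr_pmf \<alpha> N v))"
proof -
  define rsum where "rsum = (\<Sum>v\<in>V. r v)"
  have rsum_pos: "0 < rsum" if "v \<in> V" "0 < r v" for v
    using member_le_sum[of v V r] that assms(1,2) unfolding rsum_def by fastforce
  have count: "r v * (rsum * c) / rsum = r v * c"
    and weight: "r v / rsum * (rsum * c / nat \<lceil>r v * (rsum * c) / rsum\<rceil>) * rsum / (rsum * c)
                   = r v / nat \<lceil>r v * c\<rceil>"
    if "v \<in> V" "0 < r v" for v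
    using rsum_pos[OF that] assms(3) by simp_all
  have walks: "{(v, j). v \<in> {v \<in> V. 0 < r v} \<and> j < nat \<lceil>r v * (rsum * c) / rsum\<rceil>} = fora_walks V r c"
    using count by (auto simp: fora_walks_def)
  show ?thesis
    unfolding fora_pmf_def Let_def rsum_def[symmetric] walks
    by (intro map_pmf_cong ext arg_cong2[where f = "(+)"] sum.cong refl)
       (auto simp: fora_walks_def weight dest: rsum_pos)
qed

lemma fora_pmf_deviation_bound:
  fixes c l \<pi> :: real
  assumes "finite V" "\<And>v. 0 \<le> r v" "0 \<le> p t" "\<pi> = p t + (\<Sum>v\<in>V. r v * ppr \<alpha> N v t)"
    and "0 < \<pi>" "0 < c" "0 < l"
  shows "measure_pmf.prob (fora_pmf \<alpha> N V p r ((\<Sum>v\<in>V. r v) * c)) {est. l \<le> \<bar>\<pi> - est t\<bar>}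
         \<le> 2 * exp (- (c * l\<^sup>2 / (2 * (\<pi> + l / 3))))"
proof -
  let ?I = "fora_walks V r c" and ?P = "\<lambda>(v, j). rwr_pmf \<alpha> N v"
  define X where "X = (\<lambda>(v, j :: nat) w. if w = t then r v / nat \<lceil>r v * c\<rceil> else 0)"
  define \<mu> where "\<mu> = (\<Sum>v\<in>V. r v * ppr \<alpha> N v t)"
  have walks_pos: "0 < r v * c" "r v * c \<le> nat \<lceil>r v * c\<rceil>" if "(v, j) \<in> ?I" for v j
    using that assms(6) by (auto simp: fora_walks_def)
  have X_bounds: "0 \<le> X i w \<and> X i w \<le> 1 / c" if "i \<in> ?I" for i w
  proof -
    obtain v j where "i = (v, j)" by fastforce
    with that show ?thesis
      using walks_pos[of v j] assms(2,6) by (auto simp: X_def field_simps)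
  qed
  have "(\<Sum>i\<in>?I. measure_pmf.expectation (?P i) (X i))
      = (\<Sum>v\<in>{v \<in> V. 0 < r v}. \<Sum>j<nat \<lceil>r v * c\<rceil>. r v / nat \<lceil>r v * c\<rceil> * ppr \<alpha> N v t)"
    unfolding fora_walks_def using assms(1)
    by (subst sum.Sigma) (auto simp: X_def ppr_def expectation_if_eq intro!: sum.cong)
  also have "\<dots> = (\<Sum>v\<in>{v \<in> V. 0 < r v}. r v * ppr \<alpha> N v t)"
  proof (intro sum.cong refl)
    fix v assume "v \<in> {v \<in> V. 0 < r v}"
    then have "0 < r v * c" using assms(6) by simp
    then show "(\<Sum>j<nat \<lceil>r v * c\<rceil>. r v / nat \<lceil>r v * c\<rceil> * ppr \<alpha> N v t) = r v * ppr \<alpha> N v t"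
      using le_of_int_ceiling[of "r v * c"] by (auto simp del: le_of_int_ceiling)
  qed
  also have "\<dots> = \<mu>"
    unfolding \<mu>_def using assms(1,2) by (intro sum.mono_neutral_left) (auto simp: less_le)
  finally have mean: "\<mu> = (\<Sum>i\<in>?I. measure_pmf.expectation (?P i) (X i))" ..
  have "measure_pmf.prob (fora_pmf \<alpha> N V p r ((\<Sum>v\<in>V. r v) * c)) {est. l \<le> \<bar>\<pi> - est t\<bar>}
      = measure_pmf.prob (Pi_pmf ?I undefined ?P) {W. l \<le> \<bar>(\<Sum>i\<in>?I. X i (W i)) - \<mu>\<bar>}"
    unfolding fora_pmf_eq_map_Pi_pmf[OF assms(1,2,6)] measure_map_pmf assms(4) \<mu>_def[symmetric]
    by (intro arg_cong[where f = "measure_pmf.prob _"]) (auto simp: X_def case_prod_unfold)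
  also have "\<dots> \<le> 2 * exp (- (l\<^sup>2 / (2 * (1 / c) * (\<pi> + l / 3))))"
    using X_bounds assms(3-7)
    by (intro Pi_pmf_sum_Bernstein assms(1) finite_fora_walks mean) (auto simp: \<mu>_def)
  also have "\<dots> = 2 * exp (- (c * l\<^sup>2 / (2 * (\<pi> + l / 3))))"
    by simp
  finally show ?thesis .
qed

lemma fora_failure_probability_le:
  fixes \<epsilon> \<delta> \<pi> pf :: real
  assumes "0 < \<epsilon>" "0 < \<delta>" "\<delta> < \<pi>" "0 < pf" "pf \<le> 2"
  shows "2 * exp (- ((2 * \<epsilon> / 3 + 2) * ln (2 / pf) / (\<epsilon>\<^sup>2 * \<delta>) * (\<epsilon> * \<pi>)\<^sup>2
                    / (2 * (\<pi> + \<epsilon> * \<pi> / 3)))) \<le> pf"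
proof -
  have "0 \<le> ln (2 / pf)" using assms(4,5) by simp
  have "2 * (\<pi> + \<epsilon> * \<pi> / 3) = \<pi> * (2 * \<epsilon> / 3 + 2)"
    by (simp add: algebra_simps)
  moreover have "0 < 2 * \<epsilon> / 3 + 2" "0 < \<pi>" using assms(1-3) by simp_all
  ultimately have "(2 * \<epsilon> / 3 + 2) * ln (2 / pf) / (\<epsilon>\<^sup>2 * \<delta>) * (\<epsilon> * \<pi>)\<^sup>2 / (2 * (\<pi> + \<epsilon> * \<pi> / 3))
      = \<pi> / \<delta> * ln (2 / pf)"
    using assms(1,2) by (simp add: power2_eq_square)
  also have "\<dots> \<ge> ln (2 / pf)"
    using mult_right_mono[of 1 "\<pi> / \<delta>" "ln (2 / pf)"] assms(2,3) \<open>0 \<le> ln (2 / pf)\<close> by simp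
  finally have "2 * exp (- ((2 * \<epsilon> / 3 + 2) * ln (2 / pf) / (\<epsilon>\<^sup>2 * \<delta>) * (\<epsilon> * \<pi>)\<^sup>2
                    / (2 * (\<pi> + \<epsilon> * \<pi> / 3)))) \<le> 2 * exp (- ln (2 / pf))"
    by simp
  also have "\<dots> = pf" using assms(4) by (simp add: exp_minus)
  finally show ?thesis .
qed

theorem lemma3p3:
  fixes V :: "'a set" and N :: "'a \<Rightarrow> 'a set" and s :: 'a
    and \<alpha> rmax \<epsilon> \<delta> pf :: real
    and p r :: "'a \<Rightarrow> real"
  assumes "finite V"
    and "\<forall>v\<in>V. N v \<subseteq> V \<and> N v \<noteq> {}"
    and "0 < \<alpha>" and "\<alpha> < 1"
    and "s \<in> V" and "rmax > 0" and "\<epsilon> > 0"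
    and "0 < \<delta>" and "\<delta> \<le> 1"
    and "0 < pf" and "pf < 1"
    and "fp_result \<alpha> N V rmax s (p, r)"
  shows "\<forall>t\<in>V. ppr \<alpha> N s t > \<delta> \<longrightarrow>
     measure_pmf.prob
       (fora_pmf \<alpha> N V p r
          ((\<Sum>v\<in>V. r v) * ((2 * \<epsilon> / 3 + 2) * ln (2 / pf) / (\<epsilon>\<^sup>2 * \<delta>))))
       {est. \<bar>ppr \<alpha> N s t - est t\<bar> \<le> \<epsilon> * ppr \<alpha> N s t} \<ge> 1 - pf"
proof (intro ballI impI)
  fix t assume "\<delta> < ppr \<alpha> N s t"
  let ?\<pi> = "ppr \<alpha> N s t" and ?c = "(2 * \<epsilon> / 3 + 2) * ln (2 / pf) / (\<epsilon>\<^sup>2 * \<delta>)"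
  let ?Q = "fora_pmf \<alpha> N V p r ((\<Sum>v\<in>V. r v) * ?c)"
  have "fp_invariant \<alpha> N V s (p, r)"
    using fp_result_invariant assms(1-5,12) .
  then have decomp: "\<And>v. 0 \<le> r v" "0 \<le> p t" "?\<pi> = p t + (\<Sum>v\<in>V. r v * ppr \<alpha> N v t)"
    by auto
  have "0 < ln (2 / pf)" using assms(10,11) by simp
  then have "0 < ?c" using assms(7,8) by simp
  have "measure_pmf.prob ?Q {est. \<epsilon> * ?\<pi> \<le> \<bar>?\<pi> - est t\<bar>}
      \<le> 2 * exp (- (?c * (\<epsilon> * ?\<pi>)\<^sup>2 / (2 * (?\<pi> + \<epsilon> * ?\<pi> / 3))))"
    using \<open>\<delta> < ?\<pi>\<close> assms(7,8)
    by (intro fora_pmf_deviation_bound assms(1) decomp \<open>0 < ?c\<close>) simp_all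
  also have "\<dots> \<le> pf"
    using fora_failure_probability_le[OF assms(7,8) \<open>\<delta> < ?\<pi>\<close> assms(10)] assms(11) by simp
  finally have "measure_pmf.prob ?Q {est. \<not> \<bar>?\<pi> - est t\<bar> \<le> \<epsilon> * ?\<pi>} \<le> pf"
    by (rule order.trans[rotated, OF _ measure_pmf.finite_measure_mono]) auto
  then show "1 - pf \<le> measure_pmf.prob ?Q {est. \<bar>?\<pi> - est t\<bar> \<le> \<epsilon> * ?\<pi>}"
    using measure_pmf.prob_neg[of ?Q "\<lambda>est. \<bar>?\<pi> - est t\<bar> \<le> \<epsilon> * ?\<pi>"] by simp
qed

end
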